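(* Let $\Phi,\Psi:G\to[0,\infty)$ be continuous and let $\Lambda$ be relatively separated in $G$. Then \[\sum_{\lambda\in\Lambda}\Phi(\lambda^{-1}x)\Psi(y^{-1}\lambda)\le\frac{\mathrm{rel}(\Lambda)}{\mu_G(Q)}\,(M_Q\Psi*M_Q^R\Phi)(y^{-1}x)\quad\text{for all }x,y\in G,\] and \[\sum_{\lambda\in\Lambda}\Psi(y^{-1}\lambda)\le\frac{\mathrm{rel}(\Lambda)}{\mu_G(Q)}\|\Psi\|_{\mathcal{W}^L}\quad\text{for all }y\in G.\] Moreover, if $\Theta\in L^1(G)$ is continuous and $\Theta^\vee\in\mathcal{W}^L(G)$, then $D_{\Theta,\Lambda}:\ell^2(\Lambda)\to L^2(G)$, $(c_\lambda)_\lambda\mapsto\sum_{\lambda}c_\lambda L_\lambda\Theta$, is well defined and bounded with $\|D_{\Theta,\Lambda}\|_{\ell^2\to L^2}^2\le\frac{\mathrm{rel}(\Lambda)}{\mu_G(Q)}\|\Theta\|_{L^1}\|\Theta^\vee\|_{\mathcal{W}^L}$, and the defining series converges absolutely $\mu_G$-a.e. on $G$.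
   Context: $G$ is a $\sigma$-compact locally compact group with left Haar measure $\mu_G$; $Q$ a fixed symmetric open relatively compact neighborhood of $e$. $M_Qf(x)=\operatorname{ess\,sup}_{y\in xQ}|f(y)|$, $M_Q^Rf(x)=\operatorname{ess\,sup}_{y\in Qx}|f(y)|$; $*$ is convolution $(f*g)(x)=\int_Gf(y)g(y^{-1}x)\,d\mu_G(y)$. $\mathcal{W}^L(G)=\{f\in L^\infty_{\mathrm{loc}}(G):M_Qf\in L^1(G)\}$ with $\|f\|_{\mathcal{W}^L}=\|M_Qf\|_{L^1}$. $L_yf=f(y^{-1}\cdot)$, $f^\vee(x)=f(x^{-1})$. $\mathrm{rel}(\Lambda)=\sup_{x\in G}\#(\Lambda\cap xQ)$ (with multiplicity); $\Lambda$ is relatively separated if this is finite. *)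

theory Defs
  imports "HOL-Analysis.Analysis"
begin

text \<open>The group G is a type 'a with (not necessarily commutative) group operation
  written additively: x + y is the product xy, 0 is e, -x is x^{-1}.
  Thus x^{-1}y is -x + y, xQ is ((+) x) ` Q and Qx is (\<lambda>q. q + x) ` Q.\<close>

definition sigma_compact_lc_group :: "'a::{topological_group_add,t2_space} itself \<Rightarrow> bool" where
  "sigma_compact_lc_group _ \<longleftrightarrow>
     locally_compact_space (euclidean :: 'a topology) \<and>
     (\<exists>K :: nat \<Rightarrow> 'a set. (\<forall>n. compact (K n)) \<and> (\<Union>n. K n) = UNIV)"

definition left_haar_measure :: "'a::{topological_group_add,t2_space} measure \<Rightarrow> bool" where
  "left_haar_measure M \<longleftrightarrow>
     sets M = sets borel \<and>
     (\<forall>A\<in>sets M. \<forall>g. emeasure M ((+) g ` A) = emeasure M A) \<and>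
     (\<forall>K. compact K \<longrightarrow> emeasure M K < \<infinity>) \<and>
     (\<forall>U. open U \<and> U \<noteq> {} \<longrightarrow> emeasure M U > 0) \<and>
     (\<forall>A\<in>sets M. emeasure M A = (INF U\<in>{U. open U \<and> A \<subseteq> U}. emeasure M U)) \<and>
     (\<forall>U. open U \<longrightarrow> emeasure M U = (SUP K\<in>{K. compact K \<and> K \<subseteq> U}. emeasure M K))"

definition ess_sup_on :: "'a measure \<Rightarrow> 'a set \<Rightarrow> ('a \<Rightarrow> ennreal) \<Rightarrow> ennreal" where
  "ess_sup_on M S f = Inf {c. AE y in M. y \<in> S \<longrightarrow> f y \<le> c}"

definition maxL :: "'a::group_add measure \<Rightarrow> 'a set \<Rightarrow> ('a \<Rightarrow> 'b::real_normed_vector) \<Rightarrow> 'a \<Rightarrow> ennreal" where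
  "maxL M Q f x = ess_sup_on M ((+) x ` Q) (\<lambda>y. ennreal (norm (f y)))"

definition maxR :: "'a::group_add measure \<Rightarrow> 'a set \<Rightarrow> ('a \<Rightarrow> 'b::real_normed_vector) \<Rightarrow> 'a \<Rightarrow> ennreal" where
  "maxR M Q f x = ess_sup_on M ((\<lambda>q. q + x) ` Q) (\<lambda>y. ennreal (norm (f y)))"

definition conv_nn :: "'a::group_add measure \<Rightarrow> ('a \<Rightarrow> ennreal) \<Rightarrow> ('a \<Rightarrow> ennreal) \<Rightarrow> 'a \<Rightarrow> ennreal" where
  "conv_nn M f g x = (\<integral>\<^sup>+ y. f y * g (- y + x) \<partial>M)"

definition wiener_norm :: "'a::group_add measure \<Rightarrow> 'a set \<Rightarrow> ('a \<Rightarrow> 'b::real_normed_vector) \<Rightarrow> ennreal" where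
  "wiener_norm M Q f = (\<integral>\<^sup>+ x. maxL M Q f x \<partial>M)"

definition in_wiener :: "'a::{group_add,topological_space} measure \<Rightarrow> 'a set \<Rightarrow> ('a \<Rightarrow> 'b::{real_normed_vector,second_countable_topology}) \<Rightarrow> bool" where
  "in_wiener M Q f \<longleftrightarrow> f \<in> borel_measurable M \<and>
     (\<forall>K. compact K \<longrightarrow> ess_sup_on M K (\<lambda>y. ennreal (norm (f y))) < \<infinity>) \<and>
     maxL M Q f \<in> borel_measurable M \<and> wiener_norm M Q f < \<infinity>"

definition ecard :: "'i set \<Rightarrow> ennreal" where
  "ecard S = (if finite S then of_nat (card S) else \<infinity>)"

text \<open>rel(\<Lambda>) for the family \<Lambda> = (lam i)_{i\<in>I}, counted with multiplicity.\<close>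
definition rel_const :: "'a::group_add set \<Rightarrow> 'i set \<Rightarrow> ('i \<Rightarrow> 'a) \<Rightarrow> ennreal" where
  "rel_const Q I lam = (SUP x. ecard {i\<in>I. lam i \<in> (+) x ` Q})"

end

theory Submission
  imports Defs
begin

text \<open>Each term $\Phi(\lambda^{-1}x)\Psi(y^{-1}\lambda)$ is dominated, at every point $z$ of the
  translate $y^{-1}\lambda Q$, by the integrand $M_Q\Psi(z)\,M_Q^R\Phi(z^{-1}y^{-1}x)$ of the convolution,
  because for continuous functions the local essential suprema dominate point values. As no point
  lies in more than $\mathrm{rel}(\Lambda)$ of these translates, integrating over $z$ gives the first
  bound; $\Phi = 1$ gives the second. Applied to $|\Theta^\vee|$, the second bound says that
  $\sum_\lambda |\Theta(\lambda^{-1}x)| \le C$ uniformly in $x$, so by a weighted Cauchy--Schwarz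
  inequality $|\sum_\lambda c_\lambda \Theta(\lambda^{-1}x)|^2 \le C \sum_\lambda |c_\lambda|^2
  |\Theta(\lambda^{-1}x)|$, and this integrates to $C \|\Theta\|_1 \|c\|_2^2$ by left invariance.
  $\sigma$-compactness only serves to make a relatively separated family countable. All bounds are
  read in $[0,\infty]$.\<close>

lemma has_sum_iff_zero_extension:
  assumes "bij_betw g S I"
  shows "(f has_sum s) I \<longleftrightarrow> ((\<lambda>n::nat. if n \<in> S then f (g n) else 0) has_sum s) UNIV"
proof -
  have "(f has_sum s) I \<longleftrightarrow> ((\<lambda>n. f (g n)) has_sum s) S"
    using has_sum_reindex_bij_betw[OF assms, of f s] by simp
  also have "\<dots> \<longleftrightarrow> ((\<lambda>n. if n \<in> S then f (g n) else 0) has_sum s) UNIV"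
    by (rule has_sum_cong_neutral) auto
  finally show ?thesis .
qed

lemma infsum_ennreal_eq_suminf:
  fixes f :: "'i \<Rightarrow> ennreal"
  assumes "bij_betw g S I"
  shows "(\<Sum>\<^sub>\<infinity>i\<in>I. f i) = (\<Sum>n. if n \<in> S then f (g n) else 0)"
proof -
  have "(f has_sum (\<Sum>\<^sub>\<infinity>i\<in>I. f i)) I"
    by (rule has_sum_infsum) (simp add: nonneg_summable_on_complete)
  then show ?thesis
    by (simp add: has_sum_iff_zero_extension[OF assms] has_sum_imp_sums sums_unique)
qed

lemma summable_on_sums_zero_extension:
  assumes "bij_betw g S I" "f summable_on I"
  shows "(\<lambda>n. if n \<in> S then f (g n) else 0) sums (\<Sum>\<^sub>\<infinity>i\<in>I. f i)"
  using has_sum_iff_zero_extension[OF assms(1)] has_sum_infsum[OF assms(2)]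
  by (blast intro: has_sum_imp_sums)

lemma borel_measurable_zero_extension:
  assumes "bij_betw g S I" "\<And>i. i \<in> I \<Longrightarrow> f i \<in> borel_measurable M"
  shows "(\<lambda>x. if n \<in> S then f (g n) x else 0) \<in> borel_measurable M"
  using assms by (cases "n \<in> S") (auto simp: bij_betw_def)

lemma nn_integral_infsum:
  fixes f :: "'i \<Rightarrow> 'a \<Rightarrow> ennreal"
  assumes "countable I" and [measurable]: "\<And>i. i \<in> I \<Longrightarrow> f i \<in> borel_measurable M"
  shows "(\<integral>\<^sup>+ x. (\<Sum>\<^sub>\<infinity>i\<in>I. f i x) \<partial>M) = (\<Sum>\<^sub>\<infinity>i\<in>I. \<integral>\<^sup>+ x. f i x \<partial>M)"
proof -
  obtain g and S :: "nat set" where g: "bij_betw g S I"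
    using assms(1) by (rule countableE_bij)
  note [measurable] = borel_measurable_zero_extension[OF g assms(2)]
  have "(\<integral>\<^sup>+ x. (\<Sum>\<^sub>\<infinity>i\<in>I. f i x) \<partial>M) = (\<integral>\<^sup>+ x. (\<Sum>n. if n \<in> S then f (g n) x else 0) \<partial>M)"
    by (simp add: infsum_ennreal_eq_suminf[OF g])
  also have "\<dots> = (\<Sum>n. \<integral>\<^sup>+ x. (if n \<in> S then f (g n) x else 0) \<partial>M)"
    by (rule nn_integral_suminf) measurable
  also have "\<dots> = (\<Sum>n. if n \<in> S then \<integral>\<^sup>+ x. f (g n) x \<partial>M else 0)"
    by (intro suminf_cong) simp
  also have "\<dots> = (\<Sum>\<^sub>\<infinity>i\<in>I. \<integral>\<^sup>+ x. f i x \<partial>M)"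
    by (simp add: infsum_ennreal_eq_suminf[OF g])
  finally show ?thesis .
qed

lemma borel_measurable_infsum_ennreal [measurable (raw)]:
  fixes f :: "'i \<Rightarrow> 'a \<Rightarrow> ennreal"
  assumes "countable I" "\<And>i. i \<in> I \<Longrightarrow> f i \<in> borel_measurable M"
  shows "(\<lambda>x. \<Sum>\<^sub>\<infinity>i\<in>I. f i x) \<in> borel_measurable M"
proof -
  obtain g and S :: "nat set" where g: "bij_betw g S I"
    using assms(1) by (rule countableE_bij)
  note [measurable] = borel_measurable_zero_extension[OF g assms(2)]
  show ?thesis
    by (simp add: infsum_ennreal_eq_suminf[OF g])
qed

lemma borel_measurable_infsum:
  fixes f :: "'i \<Rightarrow> 'a \<Rightarrow> 'b::{banach,second_countable_topology}"
  assumes "countable I" "\<And>i. i \<in> I \<Longrightarrow> f i \<in> borel_measurable M"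
    and "\<And>x. (\<lambda>i. f i x) summable_on I"
  shows "(\<lambda>x. \<Sum>\<^sub>\<infinity>i\<in>I. f i x) \<in> borel_measurable M"
proof -
  obtain g and S :: "nat set" where g: "bij_betw g S I"
    using assms(1) by (rule countableE_bij)
  note [measurable] = borel_measurable_zero_extension[OF g assms(2)]
  show ?thesis
  proof (rule borel_measurable_LIMSEQ_metric)
    show "(\<lambda>x. \<Sum>n<N. if n \<in> S then f (g n) x else 0) \<in> borel_measurable M" for N
      by measurable
    show "(\<lambda>N. \<Sum>n<N. if n \<in> S then f (g n) x else 0) \<longlonglongrightarrow> (\<Sum>\<^sub>\<infinity>i\<in>I. f i x)" for x
      using summable_on_sums_zero_extension[OF g assms(3)] by (simp add: sums_def)
  qed
qed

lemma infsum_ennreal_mult_right: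
  fixes f :: "'i \<Rightarrow> ennreal"
  assumes "countable I"
  shows "(\<Sum>\<^sub>\<infinity>i\<in>I. f i * c) = (\<Sum>\<^sub>\<infinity>i\<in>I. f i) * c"
proof -
  obtain g and S :: "nat set" where g: "bij_betw g S I"
    using assms by (rule countableE_bij)
  have "(\<Sum>n. if n \<in> S then f (g n) * c else 0) = (\<Sum>n. (if n \<in> S then f (g n) else 0) * c)"
    by (intro suminf_cong) simp
  then show ?thesis
    by (simp add: infsum_ennreal_eq_suminf[OF g] ennreal_suminf_multc)
qed

lemma ennreal_infsum:
  fixes f :: "'i \<Rightarrow> real"
  assumes "f summable_on A" "\<And>i. i \<in> A \<Longrightarrow> f i \<ge> 0"
  shows "ennreal (\<Sum>\<^sub>\<infinity>i\<in>A. f i) = (\<Sum>\<^sub>\<infinity>i\<in>A. ennreal (f i))"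
proof -
  have "sum (ennreal \<circ> f) F = ennreal (sum f F)" if "finite F" "F \<subseteq> A" for F
    using that assms(2) by (auto intro!: sum_ennreal)
  then have "ennreal (infsum f A) = infsum (ennreal \<circ> f) A"
    by (simp add: infsum_comm_additive_general assms(1))
  then show ?thesis by (simp add: comp_def)
qed

lemma summable_on_if_infsum_ennreal_finite:
  fixes f :: "'i \<Rightarrow> real"
  assumes nonneg: "\<And>i. i \<in> I \<Longrightarrow> f i \<ge> 0" and fin: "(\<Sum>\<^sub>\<infinity>i\<in>I. ennreal (f i)) < \<infinity>"
  shows "f summable_on I"
proof (rule nonneg_bdd_above_summable_on[OF nonneg])
  have "sum f F \<le> enn2real (\<Sum>\<^sub>\<infinity>i\<in>I. ennreal (f i))" if F: "F \<subseteq> I" "finite F" for F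
  proof -
    have "ennreal (sum f F) = (\<Sum>\<^sub>\<infinity>i\<in>F. ennreal (f i))"
      using F nonneg by (simp add: sum_ennreal subset_iff)
    also have "\<dots> \<le> (\<Sum>\<^sub>\<infinity>i\<in>I. ennreal (f i))"
      using F(1) by (intro infsum_mono_neutral) (auto simp: nonneg_summable_on_complete)
    finally have "enn2real (ennreal (sum f F)) \<le> enn2real (\<Sum>\<^sub>\<infinity>i\<in>I. ennreal (f i))"
      using fin by (simp add: enn2real_mono)
    then show ?thesis
      using F nonneg by (simp add: sum_nonneg subset_iff)
  qed
  then show "bdd_above (sum f ` {F. F \<subseteq> I \<and> finite F})"
    by (intro bdd_aboveI) blast
qed

lemma infsum_weighted_Cauchy_Schwarz:
  fixes a b :: "'i \<Rightarrow> real"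
  assumes nonneg: "\<And>i. a i \<ge> 0" "\<And>i. b i \<ge> 0"
    and summable: "(\<lambda>i. a i * b i) summable_on I" "(\<lambda>i. (a i)\<^sup>2 * b i) summable_on I"
      "b summable_on I"
  shows "(\<Sum>\<^sub>\<infinity>i\<in>I. a i * b i)\<^sup>2 \<le> (\<Sum>\<^sub>\<infinity>i\<in>I. (a i)\<^sup>2 * b i) * (\<Sum>\<^sub>\<infinity>i\<in>I. b i)"
proof -
  let ?A = "\<Sum>\<^sub>\<infinity>i\<in>I. (a i)\<^sup>2 * b i" and ?B = "\<Sum>\<^sub>\<infinity>i\<in>I. b i"
  have "?A \<ge> 0" "?B \<ge> 0" "(\<Sum>\<^sub>\<infinity>i\<in>I. a i * b i) \<ge> 0"
    using nonneg by (auto intro!: infsum_nonneg)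
  moreover have "(\<Sum>\<^sub>\<infinity>i\<in>I. a i * b i) \<le> sqrt (?A * ?B)"
  proof (rule infsum_le_finite_sums[OF summable(1)])
    fix F assume F: "finite F" "F \<subseteq> I"
    have "(\<Sum>i\<in>F. a i * b i)\<^sup>2 = (\<Sum>i\<in>F. (a i * sqrt (b i)) * sqrt (b i))\<^sup>2"
      using nonneg by (simp add: mult.assoc real_sqrt_mult_self)
    also have "\<dots> \<le> (\<Sum>i\<in>F. (a i * sqrt (b i))\<^sup>2) * (\<Sum>i\<in>F. (sqrt (b i))\<^sup>2)"
      by (rule Cauchy_Schwarz_ineq_sum)
    also have "\<dots> = (\<Sum>i\<in>F. (a i)\<^sup>2 * b i) * (\<Sum>i\<in>F. b i)"
      using nonneg by (simp add: power_mult_distrib)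
    also have "\<dots> \<le> ?A * ?B"
      using F nonneg
      by (intro mult_mono finite_sum_le_infsum summable sum_nonneg infsum_nonneg) auto
    finally show "(\<Sum>i\<in>F. a i * b i) \<le> sqrt (?A * ?B)"
      by (rule real_le_rsqrt)
  qed
  ultimately show ?thesis
    by (metis mult_nonneg_nonneg power_mono real_sqrt_pow2)
qed

lemma norm_infsum_mult_squared_le:
  fixes c z :: "'i \<Rightarrow> 'b::{banach,real_normed_div_algebra}"
  assumes c: "(\<lambda>i. (norm (c i))\<^sup>2) summable_on I" and z: "(\<lambda>i. norm (z i)) summable_on I"
  shows "(\<lambda>i. norm (c i * z i)) summable_on I"
    and "(\<lambda>i. (norm (c i))\<^sup>2 * norm (z i)) summable_on I"
    and "(norm (\<Sum>\<^sub>\<infinity>i\<in>I. c i * z i))\<^sup>2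
           \<le> (\<Sum>\<^sub>\<infinity>i\<in>I. (norm (c i))\<^sup>2 * norm (z i)) * (\<Sum>\<^sub>\<infinity>i\<in>I. norm (z i))"
proof -
  define C where "C = (\<Sum>\<^sub>\<infinity>i\<in>I. (norm (c i))\<^sup>2)"
  have c_le: "(norm (c i))\<^sup>2 \<le> C" if "i \<in> I" for i
    using finite_sum_le_infsum[OF c, of "{i}"] that by (simp add: C_def)
  have summable_cz: "(\<lambda>i. norm (c i) * norm (z i)) summable_on I"
  proof (rule summable_on_comparison_test)
    show "(\<lambda>i. sqrt C * norm (z i)) summable_on I"
      using z by (rule summable_on_cmult_right)
    show "norm (c i) * norm (z i) \<le> sqrt C * norm (z i)" if "i \<in> I" for i
      using c_le[OF that] by (simp add: mult_right_mono real_le_rsqrt)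
  qed simp
  then show summable_norm: "(\<lambda>i. norm (c i * z i)) summable_on I"
    by (simp add: norm_mult)
  show summable_c2z: "(\<lambda>i. (norm (c i))\<^sup>2 * norm (z i)) summable_on I"
  proof (rule summable_on_comparison_test)
    show "(\<lambda>i. C * norm (z i)) summable_on I"
      using z by (rule summable_on_cmult_right)
    show "(norm (c i))\<^sup>2 * norm (z i) \<le> C * norm (z i)" if "i \<in> I" for i
      using c_le[OF that] by (simp add: mult_right_mono)
  qed simp
  have "norm (\<Sum>\<^sub>\<infinity>i\<in>I. c i * z i) \<le> (\<Sum>\<^sub>\<infinity>i\<in>I. norm (c i) * norm (z i))"
    using summable_norm summable_cz
    by (intro norm_infsum_le[OF has_sum_infsum has_sum_infsum])
       (auto intro: abs_summable_summable simp: norm_mult)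
  then have "(norm (\<Sum>\<^sub>\<infinity>i\<in>I. c i * z i))\<^sup>2 \<le> (\<Sum>\<^sub>\<infinity>i\<in>I. norm (c i) * norm (z i))\<^sup>2"
    by (simp add: power_mono)
  also have "\<dots> \<le> (\<Sum>\<^sub>\<infinity>i\<in>I. (norm (c i))\<^sup>2 * norm (z i)) * (\<Sum>\<^sub>\<infinity>i\<in>I. norm (z i))"
    by (rule infsum_weighted_Cauchy_Schwarz[OF _ _ summable_cz summable_c2z z]) auto
  finally show "(norm (\<Sum>\<^sub>\<infinity>i\<in>I. c i * z i))\<^sup>2
      \<le> (\<Sum>\<^sub>\<infinity>i\<in>I. (norm (c i))\<^sup>2 * norm (z i)) * (\<Sum>\<^sub>\<infinity>i\<in>I. norm (z i))" .
qed

lemma ennreal_norm_infsum_mult_squared_le: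
  fixes c z :: "'i \<Rightarrow> 'b::{banach,real_normed_div_algebra}"
  assumes c: "(\<lambda>i. (norm (c i))\<^sup>2) summable_on I" and z: "(\<lambda>i. norm (z i)) summable_on I"
  shows "ennreal ((norm (\<Sum>\<^sub>\<infinity>i\<in>I. c i * z i))\<^sup>2)
           \<le> (\<Sum>\<^sub>\<infinity>i\<in>I. ennreal ((norm (c i))\<^sup>2) * ennreal (norm (z i)))
             * (\<Sum>\<^sub>\<infinity>i\<in>I. ennreal (norm (z i)))"
proof -
  have "ennreal ((norm (\<Sum>\<^sub>\<infinity>i\<in>I. c i * z i))\<^sup>2)
      \<le> ennreal ((\<Sum>\<^sub>\<infinity>i\<in>I. (norm (c i))\<^sup>2 * norm (z i)) * (\<Sum>\<^sub>\<infinity>i\<in>I. norm (z i)))"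
    by (intro ennreal_leI norm_infsum_mult_squared_le(3)[OF c z])
  then show ?thesis
    using norm_infsum_mult_squared_le(2)[OF c z] z
    by (simp add: ennreal_mult infsum_nonneg ennreal_infsum)
qed

lemma image_add_left_eq_vimage:
  fixes S :: "'a::group_add set"
  shows "(+) a ` S = (\<lambda>x. - a + x) -` S"
proof (intro set_eqI iffI)
  fix x assume "x \<in> (\<lambda>x. - a + x) -` S"
  then show "x \<in> (+) a ` S"
    by (auto intro: image_eqI[of x _ "- a + x"] simp: add.assoc[symmetric])
qed (auto simp: add.assoc[symmetric])

lemma image_add_right_eq_vimage:
  fixes S :: "'a::group_add set"
  shows "(\<lambda>x. x + a) ` S = (\<lambda>x. x + - a) -` S"
proof (intro set_eqI iffI)
  fix x assume "x \<in> (\<lambda>x. x + - a) -` S"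
  then show "x \<in> (\<lambda>x. x + a) ` S"
    by (auto intro: image_eqI[of x _ "x + - a"] simp: add.assoc)
qed (auto simp: add.assoc)

lemma open_image_add_left:
  fixes S :: "'a::topological_group_add set"
  assumes "open S"
  shows "open ((+) a ` S)"
  unfolding image_add_left_eq_vimage
  using assms continuous_on_open_vimage[of UNIV "\<lambda>x. - a + x"]
  by (auto intro: continuous_intros)

lemma open_image_add_right:
  fixes S :: "'a::topological_group_add set"
  assumes "open S"
  shows "open ((\<lambda>x. x + a) ` S)"
  unfolding image_add_right_eq_vimage
  using assms continuous_on_open_vimage[of UNIV "\<lambda>x. x + - a"]
  by (auto intro: continuous_intros)

lemma left_haar_measureD:
  assumes "left_haar_measure M"
  shows sets_left_haar: "sets M = sets borel"
    and emeasure_left_haar_image_add: "A \<in> sets M \<Longrightarrow> emeasure M ((+) g ` A) = emeasure M A"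
    and emeasure_left_haar_compact: "compact K \<Longrightarrow> emeasure M K < \<infinity>"
    and emeasure_left_haar_open_pos: "open U \<Longrightarrow> U \<noteq> {} \<Longrightarrow> emeasure M U > 0"
  using assms unfolding left_haar_measure_def by meson+

lemma space_left_haar: "left_haar_measure M \<Longrightarrow> space M = UNIV"
  using sets_eq_imp_space_eq[OF sets_left_haar] by simp

lemma borel_measurable_left_haar_continuous:
  fixes f :: "'a::{topological_group_add,t2_space} \<Rightarrow> 'b::topological_space"
  assumes "left_haar_measure M" "continuous_on UNIV f"
  shows "f \<in> borel_measurable M"
  using borel_measurable_continuous_onI[OF assms(2)]
  by (simp add: measurable_cong_sets[OF sets_left_haar[OF assms(1)] refl])

lemma measurable_add_left_haar:
  fixes M :: "'a::{topological_group_add,t2_space} measure"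
  assumes "left_haar_measure M"
  shows "(+) a \<in> measurable M M"
  using borel_measurable_left_haar_continuous[OF assms, of "(+) a"]
  by (simp add: measurable_cong_sets[OF refl sets_left_haar[OF assms]] continuous_intros)

lemma distr_left_haar_add:
  fixes M :: "'a::{topological_group_add,t2_space} measure"
  assumes haar: "left_haar_measure M"
  shows "distr M M ((+) a) = M"
proof (rule measure_eqI)
  fix A assume "A \<in> sets (distr M M ((+) a))"
  then have A: "A \<in> sets M" by simp
  have "(+) a -` A \<inter> space M = (+) (- a) ` A"
    by (simp add: image_add_left_eq_vimage space_left_haar[OF haar])
  then show "emeasure (distr M M ((+) a)) A = emeasure M A"
    using A measurable_add_left_haar[OF haar]
    by (simp add: emeasure_distr emeasure_left_haar_image_add[OF haar])
qed simp

lemma nn_integral_left_haar_add: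
  fixes M :: "'a::{topological_group_add,t2_space} measure"
  assumes haar: "left_haar_measure M" and f: "f \<in> borel_measurable M"
  shows "(\<integral>\<^sup>+ x. f (a + x) \<partial>M) = (\<integral>\<^sup>+ x. f x \<partial>M)"
  using nn_integral_distr[OF measurable_add_left_haar[OF haar], of f] f
  by (simp add: distr_left_haar_add[OF haar])

lemma nn_integral_infsum_translates:
  fixes M :: "'a::{topological_group_add,t2_space} measure" and a :: "'i \<Rightarrow> ennreal"
  assumes haar: "left_haar_measure M" and I: "countable I"
    and [measurable]: "f \<in> borel_measurable M"
  shows "(\<integral>\<^sup>+ x. (\<Sum>\<^sub>\<infinity>i\<in>I. a i * f (- lam i + x)) \<partial>M)
           = (\<Sum>\<^sub>\<infinity>i\<in>I. a i) * (\<integral>\<^sup>+ x. f x \<partial>M)"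
proof -
  have [measurable]: "(\<lambda>x. f (- lam i + x)) \<in> borel_measurable M" for i
    using measurable_add_left_haar[OF haar, of "- lam i"] by measurable
  have "(\<integral>\<^sup>+ x. (\<Sum>\<^sub>\<infinity>i\<in>I. a i * f (- lam i + x)) \<partial>M)
      = (\<Sum>\<^sub>\<infinity>i\<in>I. a i * (\<integral>\<^sup>+ x. f (- lam i + x) \<partial>M))"
    by (simp add: nn_integral_infsum[OF I] nn_integral_cmult)
  then show ?thesis
    by (simp add: nn_integral_left_haar_add[OF haar] infsum_ennreal_mult_right[OF I])
qed

lemma emeasure_left_haar_neighbourhood:
  fixes M :: "'a::{topological_group_add,t2_space} measure"
  assumes haar: "left_haar_measure M"
    and Q: "open Q" "0 \<in> Q" "compact (closure Q)"
  shows "0 < emeasure M Q" "emeasure M Q < \<infinity>"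
proof -
  show "0 < emeasure M Q"
    using Q by (auto intro: emeasure_left_haar_open_pos[OF haar])
  have "emeasure M Q \<le> emeasure M (closure Q)"
    using Q(1) by (intro emeasure_mono) (auto simp: closure_subset sets_left_haar[OF haar])
  also have "\<dots> < \<infinity>"
    using Q(3) by (rule emeasure_left_haar_compact[OF haar])
  finally show "emeasure M Q < \<infinity>" .
qed

lemma le_ess_sup_on_continuous:
  fixes f :: "'a::topological_space \<Rightarrow> ennreal"
  assumes sets: "sets M = sets borel"
    and pos: "\<And>U. open U \<Longrightarrow> U \<noteq> {} \<Longrightarrow> emeasure M U > 0"
    and f: "continuous_on UNIV f" and U: "open U" "p \<in> U"
  shows "f p \<le> ess_sup_on M U f"
  unfolding ess_sup_on_def
proof (rule Inf_greatest, clarify, rule ccontr)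
  fix c assume AE: "AE y in M. y \<in> U \<longrightarrow> f y \<le> c" and "\<not> f p \<le> c"
  define V where "V = U \<inter> f -` {c<..}"
  have "open V"
    unfolding V_def using f U(1) continuous_on_open_vimage[of UNIV f] by auto
  moreover have "p \<in> V"
    using U(2) \<open>\<not> f p \<le> c\<close> by (simp add: V_def not_le)
  ultimately have "emeasure M V > 0"
    using pos by blast
  moreover have "AE y in M. y \<notin> V"
    using AE by eventually_elim (auto simp: V_def)
  then have "emeasure M V = 0"
    using \<open>open V\<close> sets
    by (subst AE_iff_measurable[symmetric]) (auto simp: sets_eq_imp_space_eq[OF sets])
  ultimately show False by simp
qed

lemma ess_sup_on_const_le: "ess_sup_on M S (\<lambda>y. c) \<le> c"
  unfolding ess_sup_on_def by (rule Inf_lower) simp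

lemma le_maxL:
  fixes M :: "'a::{topological_group_add,t2_space} measure" and f :: "'a \<Rightarrow> 'b::real_normed_vector"
  assumes haar: "left_haar_measure M" and "open Q" "continuous_on UNIV f" "y \<in> (+) x ` Q"
  shows "ennreal (norm (f y)) \<le> maxL M Q f x"
  unfolding maxL_def using assms
  by (intro le_ess_sup_on_continuous sets_left_haar emeasure_left_haar_open_pos open_image_add_left)
     (auto intro!: continuous_intros continuous_on_ennreal)

lemma le_maxR:
  fixes M :: "'a::{topological_group_add,t2_space} measure" and f :: "'a \<Rightarrow> 'b::real_normed_vector"
  assumes haar: "left_haar_measure M" and "open Q" "continuous_on UNIV f" "y \<in> (\<lambda>q. q + x) ` Q"
  shows "ennreal (norm (f y)) \<le> maxR M Q f x"
  unfolding maxR_def using assms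
  by (intro le_ess_sup_on_continuous sets_left_haar emeasure_left_haar_open_pos open_image_add_right)
     (auto intro!: continuous_intros continuous_on_ennreal)

lemma ecard_mono: "A \<subseteq> B \<Longrightarrow> ecard A \<le> ecard B"
  by (auto simp: ecard_def intro: card_mono dest: finite_subset)

lemma finite_if_ecard_less_top: "ecard A < \<infinity> \<Longrightarrow> finite A"
  by (auto simp: ecard_def split: if_splits)

lemma ecard_le_rel_const: "ecard {i\<in>I. lam i \<in> (+) x ` Q} \<le> rel_const Q I lam"
  unfolding rel_const_def by (rule SUP_upper) simp

lemma ecard_translate_le_rel_const:
  fixes Q :: "'a::group_add set"
  assumes "uminus ` Q = Q"
  shows "ecard {i\<in>I. z \<in> (+) (- y + lam i) ` Q} \<le> rel_const Q I lam"
proof -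
  have "{i\<in>I. z \<in> (+) (- y + lam i) ` Q} \<subseteq> {i\<in>I. lam i \<in> (+) (y + z) ` Q}"
  proof
    fix i assume "i \<in> {i\<in>I. z \<in> (+) (- y + lam i) ` Q}"
    then obtain q where "i \<in> I" "q \<in> Q" and z: "z = - y + lam i + q"
      by blast
    have "- q \<in> Q"
      using assms \<open>q \<in> Q\<close> by force
    moreover have "lam i = y + z + - q"
      using z by (simp add: add.assoc[symmetric])
    ultimately show "i \<in> {i\<in>I. lam i \<in> (+) (y + z) ` Q}"
      using \<open>i \<in> I\<close> by blast
  qed
  then show ?thesis
    by (rule order_trans[OF ecard_mono ecard_le_rel_const])
qed

lemma countable_if_rel_const_finite:
  fixes Q :: "'a::{topological_group_add,t2_space} set"
  assumes G: "sigma_compact_lc_group TYPE('a)" and Q: "open Q" "0 \<in> Q"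
    and relsep: "rel_const Q I lam < \<infinity>"
  shows "countable I"
proof -
  obtain K :: "nat \<Rightarrow> 'a set" where K: "\<And>n. compact (K n)" "(\<Union>n. K n) = UNIV"
    using G unfolding sigma_compact_lc_group_def by blast
  have "\<exists>F. finite F \<and> K n \<subseteq> (\<Union>x\<in>F. (+) x ` Q)" for n
  proof (rule compactE_image[OF K(1)])
    show "open ((+) x ` Q)" for x
      using Q(1) by (rule open_image_add_left)
    show "K n \<subseteq> (\<Union>x\<in>K n. (+) x ` Q)"
    proof
      fix x assume "x \<in> K n"
      moreover have "x \<in> (+) x ` Q"
        using Q(2) by (metis add.right_neutral image_eqI)
      ultimately show "x \<in> (\<Union>x\<in>K n. (+) x ` Q)" by blast
    qed
  qed blast
  then obtain F where F: "\<And>n. finite (F n)" "\<And>n. K n \<subseteq> (\<Union>x\<in>F n. (+) x ` Q)"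
    by metis
  \<comment> \<open>Countably many translates of $Q$ cover $G$, and each contains finitely many $\lambda_i$.\<close>
  have cover: "I \<subseteq> (\<Union>x\<in>(\<Union>n. F n). {i\<in>I. lam i \<in> (+) x ` Q})"
  proof
    fix i assume "i \<in> I"
    obtain n where "lam i \<in> K n"
      using K(2) by blast
    then obtain x where "x \<in> F n" "lam i \<in> (+) x ` Q"
      using F(2) by blast
    then show "i \<in> (\<Union>x\<in>(\<Union>n. F n). {i\<in>I. lam i \<in> (+) x ` Q})"
      using \<open>i \<in> I\<close> by blast
  qed
  have "finite {i\<in>I. lam i \<in> (+) x ` Q}" for x
    using le_less_trans[OF ecard_le_rel_const relsep] by (rule finite_if_ecard_less_top)
  then show ?thesis
    using F(1) by (intro countable_subset[OF cover] countable_UN) (auto intro: countable_finite)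
qed

lemma infsum_mult_le_nn_integral_bounded_overlap:
  fixes c :: "'i \<Rightarrow> ennreal" and F :: "'a \<Rightarrow> ennreal"
  assumes I: "countable I" and A: "\<And>i. i \<in> I \<Longrightarrow> A i \<in> sets M"
    "\<And>i. i \<in> I \<Longrightarrow> emeasure M (A i) = m"
    and overlap: "\<And>z. ecard {i\<in>I. z \<in> A i} \<le> R" and R: "R < \<infinity>"
    and bound: "\<And>i z. i \<in> I \<Longrightarrow> z \<in> A i \<Longrightarrow> c i \<le> F z"
  shows "(\<Sum>\<^sub>\<infinity>i\<in>I. c i) * m \<le> R * (\<integral>\<^sup>+ z. F z \<partial>M)"
proof -
  define G where "G z = (\<Sum>\<^sub>\<infinity>i\<in>I. c i * indicator (A i) z)" for z
  have [measurable]: "G \<in> borel_measurable M"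
    unfolding G_def using I A(1) by measurable
  have "(\<Sum>\<^sub>\<infinity>i\<in>I. c i) * m = (\<Sum>\<^sub>\<infinity>i\<in>I. \<integral>\<^sup>+ z. c i * indicator (A i) z \<partial>M)"
    using A by (simp add: infsum_ennreal_mult_right[OF I, symmetric] nn_integral_cmult_indicator
        cong: infsum_cong)
  also have "\<dots> = (\<integral>\<^sup>+ z. G z \<partial>M)"
    unfolding G_def using A(1)
    by (intro nn_integral_infsum[OF I, symmetric] borel_measurable_times_ennreal
        borel_measurable_indicator) simp_all
  finally have sum_eq: "(\<Sum>\<^sub>\<infinity>i\<in>I. c i) * m = (\<integral>\<^sup>+ z. G z \<partial>M)" .
  have G_le: "G z \<le> R * F z" for z
  proof -
    define S where "S = {i\<in>I. z \<in> A i}"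
    have "finite S"
      using overlap[of z] R unfolding S_def by (intro finite_if_ecard_less_top) (rule le_less_trans)
    have "G z = (\<Sum>\<^sub>\<infinity>i\<in>S. c i * indicator (A i) z)"
      unfolding G_def by (rule infsum_cong_neutral) (auto simp: S_def)
    also have "\<dots> = sum c S"
      using \<open>finite S\<close> by (simp add: S_def)
    also have "\<dots> \<le> of_nat (card S) * F z"
      using sum_mono[of S c "\<lambda>_. F z"] bound by (simp add: S_def)
    also have "\<dots> \<le> R * F z"
      using overlap[of z] \<open>finite S\<close> by (intro mult_right_mono) (auto simp: ecard_def S_def)
    finally show ?thesis .
  qed
  show ?thesis
  proof (cases "R = 0")
    case True
    then show ?thesis
      using G_le by (simp add: sum_eq)
  next
    case False
    \<comment> \<open>Dividing by $R$ avoids the measurability of $F$ needed to pull $R$ out of the integral.\<close>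
    have "(\<integral>\<^sup>+ z. G z \<partial>M) / R = (\<integral>\<^sup>+ z. G z / R \<partial>M)"
      by (simp add: nn_integral_divide)
    also have "\<dots> \<le> (\<integral>\<^sup>+ z. F z \<partial>M)"
      using G_le False
      by (intro nn_integral_mono divide_le_posI_ennreal) (simp_all add: zero_less_iff_neq_zero)
    finally have "(\<integral>\<^sup>+ z. G z \<partial>M) / R * R \<le> R * (\<integral>\<^sup>+ z. F z \<partial>M)"
      by (subst mult.commute) (rule mult_left_mono, simp_all)
    then show ?thesis
      using False R by (simp add: sum_eq ennreal_divide_times mult_divide_eq_ennreal)
  qed
qed

lemma infsum_le_conv_maxL_maxR:
  fixes M :: "'a::{topological_group_add,t2_space} measure" and \<Phi> \<Psi> :: "'a \<Rightarrow> real"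
  assumes haar: "left_haar_measure M"
    and Q: "open Q" "0 \<in> Q" "uminus ` Q = Q" "compact (closure Q)"
    and I: "countable I" and relsep: "rel_const Q I lam < \<infinity>"
    and \<Phi>: "continuous_on UNIV \<Phi>" "\<And>x. \<Phi> x \<ge> 0"
    and \<Psi>: "continuous_on UNIV \<Psi>" "\<And>x. \<Psi> x \<ge> 0"
  shows "(\<Sum>\<^sub>\<infinity>i\<in>I. ennreal (\<Phi> (- lam i + x) * \<Psi> (- y + lam i)))
           \<le> rel_const Q I lam / emeasure M Q * conv_nn M (maxL M Q \<Psi>) (maxR M Q \<Phi>) (- y + x)"
proof -
  define F where "F z = maxL M Q \<Psi> z * maxR M Q \<Phi> (- z + (- y + x))" for z
  have "(\<Sum>\<^sub>\<infinity>i\<in>I. ennreal (\<Phi> (- lam i + x) * \<Psi> (- y + lam i))) * emeasure M Q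
      \<le> rel_const Q I lam * (\<integral>\<^sup>+ z. F z \<partial>M)"
  proof (rule infsum_mult_le_nn_integral_bounded_overlap[OF I, where A = "\<lambda>i. (+) (- y + lam i) ` Q"])
    show "(+) (- y + lam i) ` Q \<in> sets M" for i
      using open_image_add_left[OF Q(1)] by (simp add: sets_left_haar[OF haar])
    then show "emeasure M ((+) (- y + lam i) ` Q) = emeasure M Q" for i
      using Q(1) by (simp add: emeasure_left_haar_image_add[OF haar] sets_left_haar[OF haar])
    show "ecard {i\<in>I. z \<in> (+) (- y + lam i) ` Q} \<le> rel_const Q I lam" for z
      using Q(3) by (rule ecard_translate_le_rel_const)
    fix i z assume "z \<in> (+) (- y + lam i) ` Q"
    then obtain q where "q \<in> Q" and z: "z = - y + lam i + q"
      by blast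
    have "- y + lam i = z + - q" "- lam i + x = q + (- z + (- y + x))"
      unfolding z by (simp_all only: add.assoc minus_add add.right_inverse add_0_right
          add_minus_cancel minus_minus)
    moreover have "- q \<in> Q"
      using Q(3) \<open>q \<in> Q\<close> by force
    ultimately have "ennreal (\<Phi> (- lam i + x)) \<le> maxR M Q \<Phi> (- z + (- y + x))"
      and "ennreal (\<Psi> (- y + lam i)) \<le> maxL M Q \<Psi> z"
      using le_maxL[OF haar Q(1) \<Psi>(1)] le_maxR[OF haar Q(1) \<Phi>(1)] \<open>q \<in> Q\<close> \<Phi>(2) \<Psi>(2)
      by (metis image_eqI real_norm_def abs_of_nonneg)+
    then have "ennreal (\<Phi> (- lam i + x)) * ennreal (\<Psi> (- y + lam i))
        \<le> maxR M Q \<Phi> (- z + (- y + x)) * maxL M Q \<Psi> z"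
      by (rule mult_mono) simp_all
    then show "ennreal (\<Phi> (- lam i + x) * \<Psi> (- y + lam i)) \<le> F z"
      using \<Phi>(2) \<Psi>(2) by (simp add: F_def ennreal_mult mult.commute)
  qed (use relsep in simp)
  then have "(\<Sum>\<^sub>\<infinity>i\<in>I. ennreal (\<Phi> (- lam i + x) * \<Psi> (- y + lam i))) * emeasure M Q / emeasure M Q
      \<le> rel_const Q I lam * (\<integral>\<^sup>+ z. F z \<partial>M) / emeasure M Q"
    by (rule divide_right_mono_ennreal)
  moreover have "emeasure M Q \<noteq> 0" "emeasure M Q \<noteq> \<infinity>"
    using emeasure_left_haar_neighbourhood[OF haar Q(1,2,4)] by simp_all
  ultimately show ?thesis
    by (simp add: mult_divide_eq_ennreal ennreal_divide_times ennreal_times_divide conv_nn_def F_def)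
qed

lemma infsum_le_wiener_norm:
  fixes M :: "'a::{topological_group_add,t2_space} measure" and \<Psi> :: "'a \<Rightarrow> real"
  assumes haar: "left_haar_measure M"
    and Q: "open Q" "0 \<in> Q" "uminus ` Q = Q" "compact (closure Q)"
    and I: "countable I" and relsep: "rel_const Q I lam < \<infinity>"
    and \<Psi>: "continuous_on UNIV \<Psi>" "\<And>x. \<Psi> x \<ge> 0"
  shows "(\<Sum>\<^sub>\<infinity>i\<in>I. ennreal (\<Psi> (- y + lam i))) \<le> rel_const Q I lam / emeasure M Q * wiener_norm M Q \<Psi>"
proof -
  have "(\<Sum>\<^sub>\<infinity>i\<in>I. ennreal (\<Psi> (- y + lam i)))
      \<le> rel_const Q I lam / emeasure M Q * conv_nn M (maxL M Q \<Psi>) (maxR M Q (\<lambda>_. 1::real)) (- y + y)"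
    using infsum_le_conv_maxL_maxR[OF haar Q I relsep _ _ \<Psi>, of "\<lambda>_. 1" y y] by simp
  also have "conv_nn M (maxL M Q \<Psi>) (maxR M Q (\<lambda>_. 1::real)) (- y + y) \<le> wiener_norm M Q \<Psi>"
    unfolding conv_nn_def wiener_norm_def maxR_def
    using ess_sup_on_const_le[of M _ 1] by (intro nn_integral_mono) (simp add: mult_left_le)
  finally show ?thesis
    by (simp add: mult_left_mono)
qed

lemma infsum_norm_translates_le_wiener_norm:
  fixes M :: "'a::{topological_group_add,t2_space} measure" and \<Theta> :: "'a \<Rightarrow> 'b::real_normed_vector"
  assumes haar: "left_haar_measure M"
    and Q: "open Q" "0 \<in> Q" "uminus ` Q = Q" "compact (closure Q)"
    and I: "countable I" and relsep: "rel_const Q I lam < \<infinity>"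
    and \<Theta>: "continuous_on UNIV \<Theta>"
  shows "(\<Sum>\<^sub>\<infinity>i\<in>I. ennreal (norm (\<Theta> (- lam i + x))))
           \<le> rel_const Q I lam / emeasure M Q * wiener_norm M Q (\<lambda>x. \<Theta> (- x))"
proof -
  have "continuous_on UNIV (\<lambda>u. norm (\<Theta> (- u)))"
    by (intro continuous_intros continuous_on_compose2[OF \<Theta>]) auto
  from infsum_le_wiener_norm[OF haar Q I relsep this, of x]
  show ?thesis
    by (simp add: minus_add wiener_norm_def maxL_def)
qed

lemma synthesis_operator_bounded:
  fixes M :: "'a::{topological_group_add,t2_space} measure"
    and \<Theta> :: "'a \<Rightarrow> complex" and c :: "'i \<Rightarrow> complex"
  assumes haar: "left_haar_measure M"
    and Q: "open Q" "0 \<in> Q" "uminus ` Q = Q" "compact (closure Q)"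
    and I: "countable I" and relsep: "rel_const Q I lam < \<infinity>"
    and \<Theta>: "continuous_on UNIV \<Theta>" "wiener_norm M Q (\<lambda>x. \<Theta> (- x)) < \<infinity>"
    and c: "(\<lambda>i. (norm (c i))\<^sup>2) summable_on I"
  shows synthesis_summable_norm: "(\<lambda>i. norm (c i * \<Theta> (- lam i + x))) summable_on I"
    and borel_measurable_synthesis: "(\<lambda>x. \<Sum>\<^sub>\<infinity>i\<in>I. c i * \<Theta> (- lam i + x)) \<in> borel_measurable M"
    and nn_integral_synthesis_le:
      "(\<integral>\<^sup>+ x. ennreal ((norm (\<Sum>\<^sub>\<infinity>i\<in>I. c i * \<Theta> (- lam i + x)))\<^sup>2) \<partial>M)
         \<le> rel_const Q I lam / emeasure M Q * (\<integral>\<^sup>+ x. ennreal (norm (\<Theta> x)) \<partial>M)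
           * wiener_norm M Q (\<lambda>x. \<Theta> (- x)) * ennreal (\<Sum>\<^sub>\<infinity>i\<in>I. (norm (c i))\<^sup>2)"
proof -
  define K where "K = rel_const Q I lam / emeasure M Q * wiener_norm M Q (\<lambda>x. \<Theta> (- x))"
  have "emeasure M Q \<noteq> 0"
    using emeasure_left_haar_neighbourhood[OF haar Q(1,2,4)] by simp
  then have "K < \<infinity>"
    using relsep \<Theta>(2)
    by (simp add: K_def ennreal_divide_eq_top_iff ennreal_mult_eq_top_iff less_top[symmetric])
  have translates_le: "(\<Sum>\<^sub>\<infinity>i\<in>I. ennreal (norm (\<Theta> (- lam i + x)))) \<le> K" for x
    unfolding K_def by (rule infsum_norm_translates_le_wiener_norm[OF haar Q I relsep \<Theta>(1)])
  have translates_summable: "(\<lambda>i. norm (\<Theta> (- lam i + x))) summable_on I" for x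
    using translates_le[of x] \<open>K < \<infinity>\<close> by (intro summable_on_if_infsum_ennreal_finite) auto
  show summable: "(\<lambda>i. norm (c i * \<Theta> (- lam i + x))) summable_on I" for x
    by (rule norm_infsum_mult_squared_le(1)[OF c translates_summable])
  have [measurable]: "(\<lambda>x. \<Theta> (- lam i + x)) \<in> borel_measurable M" for i
    by (intro borel_measurable_left_haar_continuous[OF haar] continuous_on_compose2[OF \<Theta>(1)]
        continuous_intros) auto
  show "(\<lambda>x. \<Sum>\<^sub>\<infinity>i\<in>I. c i * \<Theta> (- lam i + x)) \<in> borel_measurable M"
  proof (rule borel_measurable_infsum[OF I])
    show "(\<lambda>i. c i * \<Theta> (- lam i + x)) summable_on I" for x
      using summable by (rule abs_summable_summable)
  qed measurable
  define A where "A x = (\<Sum>\<^sub>\<infinity>i\<in>I. ennreal ((norm (c i))\<^sup>2) * ennreal (norm (\<Theta> (- lam i + x))))"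
    for x
  have "ennreal ((norm (\<Sum>\<^sub>\<infinity>i\<in>I. c i * \<Theta> (- lam i + x)))\<^sup>2) \<le> A x * K" for x
    unfolding A_def
    using ennreal_norm_infsum_mult_squared_le[OF c translates_summable] translates_le
    by (rule order_trans[OF _ mult_left_mono]) simp
  then have "(\<integral>\<^sup>+ x. ennreal ((norm (\<Sum>\<^sub>\<infinity>i\<in>I. c i * \<Theta> (- lam i + x)))\<^sup>2) \<partial>M)
      \<le> (\<integral>\<^sup>+ x. A x * K \<partial>M)"
    by (intro nn_integral_mono)
  also have "\<dots> = (\<integral>\<^sup>+ x. A x \<partial>M) * K"
    unfolding A_def using I by (intro nn_integral_multc) measurable
  also have "(\<integral>\<^sup>+ x. A x \<partial>M) = ennreal (\<Sum>\<^sub>\<infinity>i\<in>I. (norm (c i))\<^sup>2) * (\<integral>\<^sup>+ x. ennreal (norm (\<Theta> x)) \<partial>M)"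
  proof -
    have "(\<lambda>x. ennreal (norm (\<Theta> x))) \<in> borel_measurable M"
      using borel_measurable_left_haar_continuous[OF haar \<Theta>(1)] by measurable
    from nn_integral_infsum_translates[OF haar I this] show ?thesis
      unfolding A_def by (simp add: ennreal_infsum[OF c])
  qed
  finally show "(\<integral>\<^sup>+ x. ennreal ((norm (\<Sum>\<^sub>\<infinity>i\<in>I. c i * \<Theta> (- lam i + x)))\<^sup>2) \<partial>M)
         \<le> rel_const Q I lam / emeasure M Q * (\<integral>\<^sup>+ x. ennreal (norm (\<Theta> x)) \<partial>M)
           * wiener_norm M Q (\<lambda>x. \<Theta> (- x)) * ennreal (\<Sum>\<^sub>\<infinity>i\<in>I. (norm (c i))\<^sup>2)"
    by (simp add: K_def ac_simps)
qed

theorem lemma2p4: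
  fixes M :: "'a::{topological_group_add,t2_space} measure"
    and Q :: "'a set"
    and I :: "'i set" and lam :: "'i \<Rightarrow> 'a"
  assumes G: "sigma_compact_lc_group TYPE('a)"
    and haar: "left_haar_measure M"
    and Q_open: "open Q" and Q_e: "0 \<in> Q" and Q_sym: "uminus ` Q = Q"
    and Q_rc: "compact (closure Q)"
    and relsep: "rel_const Q I lam < \<infinity>"
  shows
    "(\<forall>(\<Phi>::'a \<Rightarrow> real) (\<Psi>::'a \<Rightarrow> real).
        continuous_on UNIV \<Phi> \<and> continuous_on UNIV \<Psi> \<and> (\<forall>x. \<Phi> x \<ge> 0) \<and> (\<forall>x. \<Psi> x \<ge> 0) \<longrightarrow>
        (\<forall>x y. (\<Sum>\<^sub>\<infinity>i\<in>I. ennreal (\<Phi> (- lam i + x) * \<Psi> (- y + lam i)))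
               \<le> rel_const Q I lam / emeasure M Q *
                 conv_nn M (maxL M Q \<Psi>) (maxR M Q \<Phi>) (- y + x)) \<and>
        (\<forall>y. (\<Sum>\<^sub>\<infinity>i\<in>I. ennreal (\<Psi> (- y + lam i)))
               \<le> rel_const Q I lam / emeasure M Q * wiener_norm M Q \<Psi>))
     \<and>
     (\<forall>\<Theta>::'a \<Rightarrow> complex.
        integrable M \<Theta> \<and> continuous_on UNIV \<Theta> \<and> in_wiener M Q (\<lambda>x. \<Theta> (- x)) \<longrightarrow>
        (\<forall>c::'i \<Rightarrow> complex. (\<lambda>i. (norm (c i))\<^sup>2) summable_on I \<longrightarrow>
           (AE x in M. (\<lambda>i. norm (c i * \<Theta> (- lam i + x))) summable_on I) \<and>
           (\<lambda>x. \<Sum>\<^sub>\<infinity>i\<in>I. c i * \<Theta> (- lam i + x)) \<in> borel_measurable M \<and>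
           (\<integral>\<^sup>+ x. ennreal ((norm (\<Sum>\<^sub>\<infinity>i\<in>I. c i * \<Theta> (- lam i + x)))\<^sup>2) \<partial>M)
             \<le> rel_const Q I lam / emeasure M Q * (\<integral>\<^sup>+ x. ennreal (norm (\<Theta> x)) \<partial>M)
               * wiener_norm M Q (\<lambda>x. \<Theta> (- x)) * ennreal (\<Sum>\<^sub>\<infinity>i\<in>I. (norm (c i))\<^sup>2)))"
proof -
  note Q = Q_open Q_e Q_sym Q_rc
  have I: "countable I"
    using G Q_open Q_e relsep by (rule countable_if_rel_const_finite)
  show ?thesis
    using infsum_le_conv_maxL_maxR[OF haar Q I relsep] infsum_le_wiener_norm[OF haar Q I relsep]
      synthesis_summable_norm[OF haar Q I relsep] borel_measurable_synthesis[OF haar Q I relsep]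
      nn_integral_synthesis_le[OF haar Q I relsep]
    by (simp add: in_wiener_def)
qed

end
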